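(* Let $U_n\subset C^n([a,b],\mathbb{K})$ ($\mathbb{K}=\mathbb{R}$ or $\mathbb{C}$, $a<b$) be a subspace of dimension $n+1$ with a Bernstein basis $p_{n,0},\dots,p_{n,n}$ for $\{a,b\}$. Let $f_0\in U_n$ be strictly positive and suppose $D_{f_0}U_n$ has a Bernstein basis $q_{n-1,0},\dots,q_{n-1,n-1}$ for $\{a,b\}$. Define the (non-zero) numbers $$c_k=\frac{p_{n,k}^{(k)}(a)}{f_0(a)\,q_{n-1,k-1}^{(k-1)}(a)}\ (k=1,\dots,n),\qquad d_k=\frac{p_{n,k}^{(n-k)}(b)}{f_0(b)\,q_{n-1,k}^{(n-1-k)}(b)}\ (k=0,\dots,n-1).$$ Then $$f_0(x)=\frac{f_0(a)}{p_{n,0}(a)}p_{n,0}(x)+\sum_{k=1}^n(-1)^k\frac{d_0\cdots d_{k-1}}{c_1\cdots c_k}\,\frac{f_0(a)}{p_{n,0}(a)}\,p_{n,k}(x).$$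
   Context: A function $f\in C^m([a,b],\mathbb{K})$ has a zero of order $k$ at $c$ if $f(c)=\dots=f^{(k-1)}(c)=0$ and $f^{(k)}(c)\ne0$ (one-sided derivatives at endpoints). For an $(m+1)$-dimensional space $V\subset C^m([a,b],\mathbb{K})$, a Bernstein basis for $\{a,b\}$ is a system $p_{m,0},\dots,p_{m,m}$ in $V$ such that each $p_{m,k}$ has a zero of order exactly $k$ at $a$ and of order exactly $m-k$ at $b$. For strictly positive (real-valued, $>0$ on $[a,b]$) $f_0\in U_n$, $D_{f_0}U_n:=\{\frac{d}{dx}(f/f_0):f\in U_n\}$, an $n$-dimensional subspace of $C^{n-1}([a,b],\mathbb{K})$. *)

theory Defs
  imports "HOL-Analysis.Analysis"
begin

fun hderiv :: "real set \<Rightarrow> nat \<Rightarrow> (real \<Rightarrow> 'a::real_normed_vector) \<Rightarrow> real \<Rightarrow> 'a" where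
  "hderiv S 0 f = f"
| "hderiv S (Suc k) f = (\<lambda>x. vector_derivative (hderiv S k f) (at x within S))"

definition Cm :: "nat \<Rightarrow> real \<Rightarrow> real \<Rightarrow> (real \<Rightarrow> 'a::real_normed_vector) set" where
  "Cm m a b = {f. (\<forall>k<m. \<forall>x\<in>{a..b}.
        (hderiv {a..b} k f has_vector_derivative hderiv {a..b} (Suc k) f x) (at x within {a..b}))
      \<and> continuous_on {a..b} (hderiv {a..b} m f)}"

definition fun_subspace :: "nat \<Rightarrow> real \<Rightarrow> real \<Rightarrow> (real \<Rightarrow> 'k::real_normed_field) set \<Rightarrow> bool" where
  "fun_subspace m a b V \<longleftrightarrow> V \<subseteq> Cm m a b \<and> (\<lambda>x. 0) \<in> V
     \<and> (\<forall>f\<in>V. \<forall>g\<in>V. (\<lambda>x. f x + g x) \<in> V)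
     \<and> (\<forall>c f. f \<in> V \<longrightarrow> (\<lambda>x. c * f x) \<in> V)"

definition has_dim :: "real \<Rightarrow> real \<Rightarrow> (real \<Rightarrow> 'k::real_normed_field) set \<Rightarrow> nat \<Rightarrow> bool" where
  "has_dim a b V d \<longleftrightarrow> (\<exists>e::nat \<Rightarrow> real \<Rightarrow> 'k. (\<forall>i<d. e i \<in> V)
     \<and> (\<forall>c. (\<forall>x\<in>{a..b}. (\<Sum>i<d. c i * e i x) = 0) \<longrightarrow> (\<forall>i<d. c i = 0))
     \<and> (\<forall>f\<in>V. \<exists>c. \<forall>x\<in>{a..b}. f x = (\<Sum>i<d. c i * e i x)))"

definition zero_order :: "real \<Rightarrow> real \<Rightarrow> (real \<Rightarrow> 'k::real_normed_vector) \<Rightarrow> real \<Rightarrow> nat \<Rightarrow> bool" where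
  "zero_order a b f c k \<longleftrightarrow> (\<forall>j<k. hderiv {a..b} j f c = 0) \<and> hderiv {a..b} k f c \<noteq> 0"

definition bernstein_basis :: "(real \<Rightarrow> 'k::real_normed_vector) set \<Rightarrow> nat \<Rightarrow> real \<Rightarrow> real
    \<Rightarrow> (nat \<Rightarrow> real \<Rightarrow> 'k) \<Rightarrow> bool" where
  "bernstein_basis V m a b p \<longleftrightarrow>
     (\<forall>k\<le>m. p k \<in> V \<and> zero_order a b (p k) a k \<and> zero_order a b (p k) b (m - k))"

definition Dquot :: "real \<Rightarrow> real \<Rightarrow> (real \<Rightarrow> 'k::real_normed_field) \<Rightarrow> (real \<Rightarrow> 'k) set \<Rightarrow> (real \<Rightarrow> 'k) set" where
  "Dquot a b f0 U = {hderiv {a..b} 1 (\<lambda>x. f x / f0 x) | f. f \<in> U}"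

end

theory Submission
  imports Defs
begin

(*
  Write f0 = \<Sum>k\<le>n. \<alpha> k * p k. Dividing by f0 and differentiating gives
  \<Sum>k\<le>n. \<alpha> k * (p k / f0)' = 0. For k < n split this relation into a tail (indices > k)
  and a head (indices \<le> k), so that tail = - head. The tail lies in D_{f0}U and vanishes to
  order k at a, because p i has a zero of order i there; the head vanishes to order n - 1 - k at b,
  because p i has a zero of order n - i there. Expanding the tail in the Bernstein basis q of
  D_{f0}U, the distinct zero orders of the q j at a and at b kill every coefficient except that of
  q k. Comparing the k-th derivative at a and the (n-1-k)-th derivative at b of tail = \<beta> * q k
  yields \<alpha> (k+1) * c (k+1) = \<beta> = - \<alpha> k * d k, and evaluating the expansion of f0 at a
  gives \<alpha> 0 = f0 a / p 0 a.
*)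

declare hderiv.simps(2) [simp del]

section \<open>Higher derivatives on a closed interval\<close>

lemma hderiv_hderiv_one: "hderiv S k (hderiv S 1 f) = hderiv S (Suc k) f"
  by (induction k) (simp_all add: hderiv.simps(2))

lemma hderiv_cong:
  assumes "\<And>y. y \<in> S \<Longrightarrow> f y = g y" "x \<in> S"
  shows "hderiv S k f x = hderiv S k g x"
  using assms(2)
proof (induction k arbitrary: x)
  case (Suc k)
  then show ?case
    unfolding hderiv.simps(2) by (intro vector_derivative_cong_eq always_eventually) auto
qed (use assms in simp)

(* Cm without continuity of the m-th derivative, which the argument never needs. *)
definition Dm :: "nat \<Rightarrow> real \<Rightarrow> real \<Rightarrow> (real \<Rightarrow> 'a::real_normed_vector) set" where
  "Dm m a b = {f. \<forall>k<m. \<forall>x\<in>{a..b}.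
     (hderiv {a..b} k f has_vector_derivative hderiv {a..b} (Suc k) f x) (at x within {a..b})}"

lemma Cm_subset_Dm: "Cm m a b \<subseteq> Dm m a b"
  unfolding Cm_def Dm_def by auto

lemma Dm_0 [simp]: "f \<in> Dm 0 a b"
  unfolding Dm_def by simp

lemma Dm_mono: "f \<in> Dm m a b \<Longrightarrow> k \<le> m \<Longrightarrow> f \<in> Dm k a b"
  unfolding Dm_def by auto

lemma Dm_Suc_iff: "f \<in> Dm (Suc m) a b \<longleftrightarrow>
   (\<forall>x\<in>{a..b}. (f has_vector_derivative hderiv {a..b} 1 f x) (at x within {a..b}))
   \<and> hderiv {a..b} 1 f \<in> Dm m a b"
  unfolding Dm_def mem_Collect_eq hderiv_hderiv_one All_less_Suc2 by simp

lemma Dm_SucD: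
  assumes "f \<in> Dm (Suc m) a b"
  shows "f \<in> Dm m a b" "hderiv {a..b} 1 f \<in> Dm m a b"
    and "x \<in> {a..b} \<Longrightarrow> (f has_vector_derivative hderiv {a..b} 1 f x) (at x within {a..b})"
  using assms Dm_mono[OF assms, of m] Dm_Suc_iff[of f] by auto

lemma Dm_cong:
  assumes f: "f \<in> Dm m a b" and fg: "\<And>x. x \<in> {a..b} \<Longrightarrow> f x = g x"
  shows "g \<in> Dm m a b"
  unfolding Dm_def mem_Collect_eq
proof (intro allI impI ballI)
  fix k x assume "k < m" and x: "x \<in> {a..b}"
  have eq: "hderiv {a..b} j f y = hderiv {a..b} j g y" if "y \<in> {a..b}" for j y
    using hderiv_cong[OF fg that] .
  have "(hderiv {a..b} k f has_vector_derivative hderiv {a..b} (Suc k) f x) (at x within {a..b})"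
    using f \<open>k < m\<close> x unfolding Dm_def by auto
  then show "(hderiv {a..b} k g has_vector_derivative hderiv {a..b} (Suc k) g x) (at x within {a..b})"
    using x eq[OF x, of "Suc k"] by (auto intro: has_vector_derivative_weaken eq)
qed

context
  fixes a b :: real
  assumes ab: "a < b"
begin

lemma hderiv_one_eqI:
  assumes "x \<in> {a..b}" "(f has_vector_derivative v) (at x within {a..b})"
  shows "hderiv {a..b} 1 f x = v"
  using vector_derivative_within_cbox[of a b x f v] ab assms by (simp add: hderiv.simps(2))

lemma Dm_SucI:
  assumes deriv: "\<And>x. x \<in> {a..b} \<Longrightarrow> (f has_vector_derivative f' x) (at x within {a..b})"
    and f': "f' \<in> Dm m a b"
  shows "f \<in> Dm (Suc m) a b"
    and "x \<in> {a..b} \<Longrightarrow> hderiv {a..b} (Suc k) f x = hderiv {a..b} k f' x"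
proof -
  have f'_eq: "\<And>x. x \<in> {a..b} \<Longrightarrow> hderiv {a..b} 1 f x = f' x"
    using hderiv_one_eqI deriv by blast
  show "f \<in> Dm (Suc m) a b"
    unfolding Dm_Suc_iff using deriv f'_eq Dm_cong[OF f'] by simp
  show "x \<in> {a..b} \<Longrightarrow> hderiv {a..b} (Suc k) f x = hderiv {a..b} k f' x"
    unfolding hderiv_hderiv_one[symmetric] by (rule hderiv_cong[OF f'_eq])
qed

lemma Dm_sum:
  fixes f :: "'i \<Rightarrow> real \<Rightarrow> 'a::real_normed_algebra"
  assumes "\<And>j. j \<in> A \<Longrightarrow> f j \<in> Dm m a b"
  shows "(\<lambda>x. \<Sum>j\<in>A. c j * f j x) \<in> Dm m a b"
    and "k \<le> m \<Longrightarrow> x \<in> {a..b} \<Longrightarrow>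
      hderiv {a..b} k (\<lambda>x. \<Sum>j\<in>A. c j * f j x) x = (\<Sum>j\<in>A. c j * hderiv {a..b} k (f j) x)"
proof -
  have "(\<lambda>x. \<Sum>j\<in>A. c j * f j x) \<in> Dm m a b \<and> (\<forall>k\<le>m. \<forall>x\<in>{a..b}.
      hderiv {a..b} k (\<lambda>x. \<Sum>j\<in>A. c j * f j x) x = (\<Sum>j\<in>A. c j * hderiv {a..b} k (f j) x))"
    using assms
  proof (induction m arbitrary: f)
    case 0
    then show ?case by simp
  next
    case (Suc m)
    have deriv: "((\<lambda>x. \<Sum>j\<in>A. c j * f j x) has_vector_derivative (\<Sum>j\<in>A. c j * hderiv {a..b} 1 (f j) x))
        (at x within {a..b})" if "x \<in> {a..b}" for x
      using that Suc.prems by (intro has_vector_derivative_sum has_vector_derivative_mult_right Dm_SucD(3))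
    have "hderiv {a..b} 1 (f j) \<in> Dm m a b" if "j \<in> A" for j
      using Dm_SucD(2)[OF Suc.prems[OF that]] .
    note IH = Suc.IH[of "\<lambda>j. hderiv {a..b} 1 (f j)", OF this]
    have "hderiv {a..b} k (\<lambda>x. \<Sum>j\<in>A. c j * f j x) x = (\<Sum>j\<in>A. c j * hderiv {a..b} k (f j) x)"
      if "k \<le> Suc m" "x \<in> {a..b}" for k x
    proof (cases k)
      case (Suc k')
      then show ?thesis
        using Dm_SucI(2)[OF deriv IH[THEN conjunct1] that(2)] IH that
        by (simp only: hderiv_hderiv_one)
    qed simp
    then show ?case
      using Dm_SucI(1)[OF deriv IH[THEN conjunct1]] by blast
  qed
  then show "(\<lambda>x. \<Sum>j\<in>A. c j * f j x) \<in> Dm m a b"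
    and "k \<le> m \<Longrightarrow> x \<in> {a..b} \<Longrightarrow>
      hderiv {a..b} k (\<lambda>x. \<Sum>j\<in>A. c j * f j x) x = (\<Sum>j\<in>A. c j * hderiv {a..b} k (f j) x)"
    by auto
qed

lemma hderiv_const_zero: "x \<in> {a..b} \<Longrightarrow> hderiv {a..b} k (\<lambda>x. 0::'a::real_normed_algebra) x = 0"
  using Dm_sum(2)[where A="{}" and m=k and k=k] by simp

lemma Dm_add:
  fixes f g :: "real \<Rightarrow> 'a::real_normed_algebra_1"
  assumes "f \<in> Dm m a b" "g \<in> Dm m a b"
  shows "(\<lambda>x. f x + g x) \<in> Dm m a b"
    and "k \<le> m \<Longrightarrow> x \<in> {a..b} \<Longrightarrow>
      hderiv {a..b} k (\<lambda>x. f x + g x) x = hderiv {a..b} k f x + hderiv {a..b} k g x"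
proof -
  have "(if j then g else f) \<in> Dm m a b" for j
    using assms by simp
  from Dm_sum[where A=UNIV and f="\<lambda>j. if j then g else f" and c="\<lambda>_. 1", OF this] show
    "(\<lambda>x. f x + g x) \<in> Dm m a b"
    "k \<le> m \<Longrightarrow> x \<in> {a..b} \<Longrightarrow>
      hderiv {a..b} k (\<lambda>x. f x + g x) x = hderiv {a..b} k f x + hderiv {a..b} k g x"
    by (simp_all add: UNIV_bool)
qed

lemma Dm_scale:
  fixes f :: "real \<Rightarrow> 'a::real_normed_algebra"
  assumes "f \<in> Dm m a b"
  shows "(\<lambda>x. c * f x) \<in> Dm m a b"
    and "k \<le> m \<Longrightarrow> x \<in> {a..b} \<Longrightarrow> hderiv {a..b} k (\<lambda>x. c * f x) x = c * hderiv {a..b} k f x"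
  using Dm_sum[where A=UNIV and f="\<lambda>_::unit. f" and c="\<lambda>_. c"] assms by (simp_all add: UNIV_unit)

lemma Dm_has_vector_derivative_mult:
  fixes f g :: "real \<Rightarrow> 'a::real_normed_algebra"
  assumes "f \<in> Dm (Suc m) a b" "g \<in> Dm (Suc m) a b" "x \<in> {a..b}"
  shows "((\<lambda>x. f x * g x) has_vector_derivative f x * hderiv {a..b} 1 g x + hderiv {a..b} 1 f x * g x)
    (at x within {a..b})"
  using assms by (intro has_vector_derivative_mult Dm_SucD(3))

lemma Dm_mult:
  fixes f g :: "real \<Rightarrow> 'a::real_normed_algebra_1"
  assumes "f \<in> Dm m a b" "g \<in> Dm m a b"
  shows "(\<lambda>x. f x * g x) \<in> Dm m a b"
  using assms
proof (induction m arbitrary: f g)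
  case 0
  then show ?case by simp
next
  case (Suc m)
  have "(\<lambda>x. f x * hderiv {a..b} 1 g x + hderiv {a..b} 1 f x * g x) \<in> Dm m a b"
    using Suc.IH Dm_SucD[OF Suc.prems(1)] Dm_SucD[OF Suc.prems(2)] by (intro Dm_add) auto
  then show ?case
    using Dm_has_vector_derivative_mult[OF Suc.prems] by (rule Dm_SucI(1)[rotated])
qed

lemma has_vector_derivative_inverse:
  fixes f :: "real \<Rightarrow> 'a::real_normed_div_algebra"
  assumes "(f has_vector_derivative f') (at x within S)" "f x \<noteq> 0"
  shows "((\<lambda>x. inverse (f x)) has_vector_derivative - (inverse (f x) * f' * inverse (f x))) (at x within S)"
proof -
  have "(\<lambda>h. - (inverse (f x) * (h *\<^sub>R f') * inverse (f x))) = (\<lambda>h. h *\<^sub>R - (inverse (f x) * f' * inverse (f x)))"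
    by (simp add: fun_eq_iff)
  then show ?thesis
    using Deriv.has_derivative_inverse[OF assms(2) assms(1)[unfolded has_vector_derivative_def]]
    unfolding has_vector_derivative_def by simp
qed

lemma Dm_inverse:
  fixes f :: "real \<Rightarrow> 'a::real_normed_field"
  assumes "f \<in> Dm m a b" "\<And>x. x \<in> {a..b} \<Longrightarrow> f x \<noteq> 0"
  shows "(\<lambda>x. inverse (f x)) \<in> Dm m a b"
  using assms(1)
proof (induction m)
  case 0
  then show ?case by simp
next
  case (Suc m)
  have inv: "(\<lambda>x. inverse (f x)) \<in> Dm m a b" and f': "hderiv {a..b} 1 f \<in> Dm m a b"
    using Suc Dm_SucD by auto
  have "(\<lambda>x. - 1 * (inverse (f x) * hderiv {a..b} 1 f x * inverse (f x))) \<in> Dm m a b"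
    by (intro Dm_scale Dm_mult inv f')
  moreover have "((\<lambda>x. inverse (f x)) has_vector_derivative
      - 1 * (inverse (f x) * hderiv {a..b} 1 f x * inverse (f x))) (at x within {a..b})"
    if "x \<in> {a..b}" for x
    using has_vector_derivative_inverse[OF Dm_SucD(3)[OF Suc.prems that] assms(2)[OF that]] by simp
  ultimately show ?case
    by (rule Dm_SucI(1)[rotated])
qed

lemma Dm_divide:
  fixes f g :: "real \<Rightarrow> 'a::real_normed_field"
  assumes "f \<in> Dm m a b" "g \<in> Dm m a b" "\<And>x. x \<in> {a..b} \<Longrightarrow> g x \<noteq> 0"
  shows "(\<lambda>x. f x / g x) \<in> Dm m a b"
  using Dm_mult[OF assms(1) Dm_inverse[OF assms(2,3)]] by (simp add: divide_inverse)

lemma hderiv_Suc_mult: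
  fixes g h :: "real \<Rightarrow> 'a::real_normed_algebra_1"
  assumes g: "g \<in> Dm (Suc K) a b" and h: "h \<in> Dm (Suc K) a b" and "i \<le> K" "x \<in> {a..b}"
  shows "hderiv {a..b} (Suc i) (\<lambda>x. g x * h x) x
    = hderiv {a..b} i (\<lambda>x. g x * hderiv {a..b} 1 h x) x + hderiv {a..b} i (\<lambda>x. hderiv {a..b} 1 g x * h x) x"
proof -
  have "(\<lambda>x. g x * hderiv {a..b} 1 h x) \<in> Dm K a b" "(\<lambda>x. hderiv {a..b} 1 g x * h x) \<in> Dm K a b"
    using Dm_SucD[OF g] Dm_SucD[OF h] by (auto intro: Dm_mult)
  then show ?thesis
    using Dm_SucI(2)[OF Dm_has_vector_derivative_mult[OF g h] Dm_add(1) \<open>x \<in> {a..b}\<close>]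
      Dm_add(2) \<open>i \<le> K\<close> \<open>x \<in> {a..b}\<close> by simp
qed

lemma hderiv_mult_flat:
  fixes g h :: "real \<Rightarrow> 'a::real_normed_algebra_1"
  assumes c: "c \<in> {a..b}" and "g \<in> Dm K a b" "h \<in> Dm K a b"
    and flat: "\<And>i. i < K \<Longrightarrow> hderiv {a..b} i g c = 0"
  shows "i < K \<Longrightarrow> hderiv {a..b} i (\<lambda>x. g x * h x) c = 0"
    and "hderiv {a..b} K (\<lambda>x. g x * h x) c = hderiv {a..b} K g c * h c"
proof -
  have "(\<forall>i<K. hderiv {a..b} i (\<lambda>x. g x * h x) c = 0)
    \<and> hderiv {a..b} K (\<lambda>x. g x * h x) c = hderiv {a..b} K g c * h c"
    using assms(2-4)
  proof (induction K arbitrary: g h)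
    case (Suc K)
    define g' h' where "g' = hderiv {a..b} 1 g" and "h' = hderiv {a..b} 1 h"
    have flat': "hderiv {a..b} i g' c = 0" if "i < K" for i
      using Suc.prems(3) that unfolding g'_def hderiv_hderiv_one by simp
    note IH1 = Suc.IH[OF Dm_SucD(1)[OF Suc.prems(1)] Dm_SucD(2)[OF Suc.prems(2), folded h'_def]]
      and IH2 = Suc.IH[OF Dm_SucD(2)[OF Suc.prems(1), folded g'_def] Dm_SucD(1)[OF Suc.prems(2)] flat']
    have step: "hderiv {a..b} (Suc i) (\<lambda>x. g x * h x) c
        = hderiv {a..b} i (\<lambda>x. g x * h' x) c + hderiv {a..b} i (\<lambda>x. g' x * h x) c" if "i \<le> K" for i
      unfolding g'_def h'_def using Suc.prems(1,2) that c by (rule hderiv_Suc_mult)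
    have "hderiv {a..b} i (\<lambda>x. g x * h x) c = 0" if "i < Suc K" for i
    proof (cases i)
      case 0
      then show ?thesis using Suc.prems(3)[of 0] by simp
    next
      case (Suc i')
      then show ?thesis using step[of i'] that IH1 IH2 Suc.prems(3) by simp
    qed
    moreover have "hderiv {a..b} (Suc K) (\<lambda>x. g x * h x) c = hderiv {a..b} (Suc K) g c * h c"
      using step[of K] IH1 IH2 Suc.prems(3) unfolding g'_def hderiv_hderiv_one by simp
    ultimately show ?case by blast
  qed simp
  then show "i < K \<Longrightarrow> hderiv {a..b} i (\<lambda>x. g x * h x) c = 0"
    and "hderiv {a..b} K (\<lambda>x. g x * h x) c = hderiv {a..b} K g c * h c"
    by auto
qed

lemma hderiv_divide_flat:
  fixes f g :: "real \<Rightarrow> 'a::real_normed_field"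
  assumes "c \<in> {a..b}" "f \<in> Dm K a b" "g \<in> Dm K a b" "\<And>x. x \<in> {a..b} \<Longrightarrow> g x \<noteq> 0"
    and "\<And>i. i < K \<Longrightarrow> hderiv {a..b} i f c = 0"
  shows "i < K \<Longrightarrow> hderiv {a..b} i (\<lambda>x. f x / g x) c = 0"
    and "hderiv {a..b} K (\<lambda>x. f x / g x) c = hderiv {a..b} K f c / g c"
  using hderiv_mult_flat[OF assms(1,2) Dm_inverse[OF assms(3,4)] assms(5)]
  by (simp_all add: divide_inverse)

end

section \<open>Spans of finite families of functions\<close>

definition in_span_on :: "'a set \<Rightarrow> (nat \<Rightarrow> 'a \<Rightarrow> 'k::comm_ring) \<Rightarrow> nat \<Rightarrow> ('a \<Rightarrow> 'k) \<Rightarrow> bool" where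
  "in_span_on S w N f \<longleftrightarrow> (\<exists>c. \<forall>x\<in>S. f x = (\<Sum>j<N. c j * w j x))"

definition lin_indep_on :: "'a set \<Rightarrow> (nat \<Rightarrow> 'a \<Rightarrow> 'k::comm_ring) \<Rightarrow> nat \<Rightarrow> bool" where
  "lin_indep_on S v N \<longleftrightarrow> (\<forall>u. (\<forall>x\<in>S. (\<Sum>j<N. u j * v j x) = 0) \<longrightarrow> (\<forall>j<N. u j = 0))"

lemma has_dim_iff:
  "has_dim a b V d \<longleftrightarrow>
    (\<exists>e. (\<forall>i<d. e i \<in> V) \<and> lin_indep_on {a..b} e d \<and> (\<forall>f\<in>V. in_span_on {a..b} e d f))"
  unfolding has_dim_def lin_indep_on_def in_span_on_def ..

lemma in_span_on_subset_sum:
  assumes "A \<subseteq> {..<N}"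
  shows "in_span_on S w N (\<lambda>x. \<Sum>j\<in>A. c j * w j x)"
  unfolding in_span_on_def
proof (intro exI ballI)
  fix x
  have "(\<Sum>j<N. (if j \<in> A then c j else 0) * w j x) = (\<Sum>j<N. if j \<in> A then c j * w j x else 0)"
    by (intro sum.cong) auto
  also have "\<dots> = (\<Sum>j\<in>{..<N} \<inter> A. c j * w j x)"
    by (simp add: sum.inter_restrict)
  finally show "(\<Sum>j\<in>A. c j * w j x) = (\<Sum>j<N. (if j \<in> A then c j else 0) * w j x)"
    using assms by (simp add: Int_absorb1)
qed

lemma rows_linearly_dependent:
  fixes C :: "nat \<Rightarrow> nat \<Rightarrow> 'k::field"
  assumes "finite I" "d < card I"
  shows "\<exists>u. (\<exists>i\<in>I. u i \<noteq> 0) \<and> (\<forall>j<d. (\<Sum>i\<in>I. u i * C i j) = 0)"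
  using assms
proof (induction d arbitrary: I C)
  case 0
  then obtain i where "i \<in> I" by fastforce
  then show ?case by (intro exI[of _ "\<lambda>_. 1"]) auto
next
  case (Suc d)
  show ?case
  proof (cases "\<forall>i\<in>I. C i d = 0")
    case True
    obtain u where u: "\<exists>i\<in>I. u i \<noteq> 0" "\<forall>j<d. (\<Sum>i\<in>I. u i * C i j) = 0"
      using Suc.IH[of I C] Suc.prems by auto
    then show ?thesis
      using True by (auto simp: less_Suc_eq)
  next
    case False
    then obtain r where r: "r \<in> I" "C r d \<noteq> 0" by blast
    define C' where "C' = (\<lambda>i j. C i j - C i d / C r d * C r j)"
    have "d < card (I - {r})"
      using Suc.prems r by simp
    then obtain u' where u': "\<exists>i\<in>I - {r}. u' i \<noteq> 0" "\<forall>j<d. (\<Sum>i\<in>I - {r}. u' i * C' i j) = 0"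
      using Suc.IH[of "I - {r}" C'] Suc.prems(1) by blast
    define u where "u = u'(r := - (\<Sum>i\<in>I - {r}. u' i * C i d) / C r d)"
    have eq: "(\<Sum>i\<in>I. u i * C i j) = (\<Sum>i\<in>I - {r}. u' i * C' i j)" for j
    proof -
      have "(\<Sum>i\<in>I. u i * C i j) = u r * C r j + (\<Sum>i\<in>I - {r}. u' i * C i j)"
        using Suc.prems(1) r(1) by (simp add: sum.remove u_def)
      then show ?thesis
        unfolding C'_def u_def
        by (simp add: algebra_simps sum_subtractf sum_distrib_left sum_distrib_right sum_divide_distrib)
    qed
    have "\<forall>j<Suc d. (\<Sum>i\<in>I. u i * C i j) = 0"
      using u'(2) r(2) by (auto simp: eq less_Suc_eq C'_def)
    moreover have "\<exists>i\<in>I. u i \<noteq> 0"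
      using u'(1) unfolding u_def by auto
    ultimately show ?thesis by blast
  qed
qed

lemma dependent_if_in_smaller_span:
  fixes v w :: "nat \<Rightarrow> 'a \<Rightarrow> 'k::field"
  assumes "\<And>i. i < N \<Longrightarrow> in_span_on S w d (v i)" "d < N"
  shows "\<exists>u. (\<exists>i<N. u i \<noteq> 0) \<and> (\<forall>x\<in>S. (\<Sum>i<N. u i * v i x) = 0)"
proof -
  obtain C where C: "\<And>i x. i < N \<Longrightarrow> x \<in> S \<Longrightarrow> v i x = (\<Sum>j<d. C i j * w j x)"
    using assms(1) unfolding in_span_on_def by metis
  obtain u where u: "\<exists>i<N. u i \<noteq> 0" "\<forall>j<d. (\<Sum>i<N. u i * C i j) = 0"
    using rows_linearly_dependent[of "{..<N}" d C] assms(2) by auto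
  have "(\<Sum>i<N. u i * v i x) = 0" if "x \<in> S" for x
  proof -
    have "(\<Sum>i<N. u i * v i x) = (\<Sum>j<d. (\<Sum>i<N. u i * C i j) * w j x)"
      using C that by (simp add: sum_distrib_left sum_distrib_right mult.assoc sum.swap[of _ "{..<N}"])
    then show ?thesis using u(2) by simp
  qed
  with u(1) show ?thesis by blast
qed

lemma in_span_of_lin_indep:
  fixes v w :: "nat \<Rightarrow> 'a \<Rightarrow> 'k::field"
  assumes v_span: "\<And>i. i < N \<Longrightarrow> in_span_on S w N (v i)" and indep: "lin_indep_on S v N"
    and f: "in_span_on S w N f"
  shows "in_span_on S v N f"
proof -
  have "in_span_on S w N ((v(N := f)) i)" if "i < Suc N" for i
    using that v_span f by (cases "i = N") auto
  from dependent_if_in_smaller_span[of "Suc N" S w N "v(N := f)", OF this lessI]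
  obtain u where u: "\<exists>i<Suc N. u i \<noteq> 0" "\<forall>x\<in>S. (\<Sum>i<Suc N. u i * (v(N := f)) i x) = 0"
    by blast
  have "(\<Sum>i<N. u i * (v(N := f)) i x) = (\<Sum>i<N. u i * v i x)" for x
    by (intro sum.cong) auto
  then have rel: "\<forall>x\<in>S. (\<Sum>i<N. u i * v i x) + u N * f x = 0"
    using u(2) by simp
  have "u N \<noteq> 0"
  proof
    assume "u N = 0"
    then have "\<forall>i<N. u i = 0"
      using rel indep unfolding lin_indep_on_def by simp
    with \<open>u N = 0\<close> u(1) show False
      using less_Suc_eq by auto
  qed
  have "f x = (\<Sum>i<N. - u i / u N * v i x)" if "x \<in> S" for x
  proof -
    have "u N * f x = - (\<Sum>i<N. u i * v i x)"
      using rel that by (simp add: eq_neg_iff_add_eq_0 add.commute)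
    then have "f x = - (\<Sum>i<N. u i * v i x) / u N"
      using \<open>u N \<noteq> 0\<close> by (simp add: field_simps)
    then show ?thesis
      by (simp add: sum_divide_distrib[symmetric] sum_negf)
  qed
  then show ?thesis
    unfolding in_span_on_def by (intro exI[of _ "\<lambda>i. - u i / u N"]) blast
qed

section \<open>Zero orders of linear combinations\<close>

context
  fixes a b :: real
  assumes ab: "a < b"
begin

lemma lincomb_flat_coeffs_zero:
  fixes v :: "nat \<Rightarrow> real \<Rightarrow> 'a::real_normed_field" and ord :: "nat \<Rightarrow> nat"
  assumes c: "c \<in> {a..b}" and D: "\<And>j. j < N \<Longrightarrow> v j \<in> Dm M a b"
    and ord: "\<And>j. j < N \<Longrightarrow> zero_order a b (v j) c (ord j)"
    and inj: "inj_on ord {..<N}" and "K \<le> Suc M"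
    and flat: "\<And>i. i < K \<Longrightarrow> hderiv {a..b} i (\<lambda>x. \<Sum>j<N. \<beta> j * v j x) c = 0"
  shows "j < N \<Longrightarrow> ord j < K \<Longrightarrow> \<beta> j = 0"
proof (induction "ord j" arbitrary: j rule: less_induct)
  case less
  have "0 = hderiv {a..b} (ord j) (\<lambda>x. \<Sum>j<N. \<beta> j * v j x) c"
    using flat less.prems(2) by simp
  also have "\<dots> = (\<Sum>i<N. \<beta> i * hderiv {a..b} (ord j) (v i) c)"
    using Dm_sum(2)[OF ab, of "{..<N}" v M] D c less.prems \<open>K \<le> Suc M\<close> by simp
  also have "\<dots> = (\<Sum>i\<in>{j}. \<beta> i * hderiv {a..b} (ord j) (v i) c)"
  proof (rule sum.mono_neutral_right)
    show "\<forall>i\<in>{..<N} - {j}. \<beta> i * hderiv {a..b} (ord j) (v i) c = 0"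
    proof
      fix i assume i: "i \<in> {..<N} - {j}"
      then have "ord i \<noteq> ord j"
        using inj less.prems(1) unfolding inj_on_def by blast
      then consider "ord i < ord j" | "ord j < ord i"
        by linarith
      then show "\<beta> i * hderiv {a..b} (ord j) (v i) c = 0"
      proof cases
        case 1
        then show ?thesis using less.hyps i less.prems by auto
      next
        case 2
        then show ?thesis using ord i unfolding zero_order_def by auto
      qed
    qed
  qed (use less.prems in auto)
  finally show "\<beta> j = 0"
    using ord[OF less.prems(1)] unfolding zero_order_def by simp
qed

lemma lin_indep_on_zero_orders:
  fixes v :: "nat \<Rightarrow> real \<Rightarrow> 'a::real_normed_field"
  assumes c: "c \<in> {a..b}" and D: "\<And>j. j < N \<Longrightarrow> v j \<in> Dm M a b"
    and ord: "\<And>j. j < N \<Longrightarrow> zero_order a b (v j) c (ord j)"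
    and inj: "inj_on ord {..<N}" and ord_le: "\<And>j. j < N \<Longrightarrow> ord j \<le> M"
  shows "lin_indep_on {a..b} v N"
  unfolding lin_indep_on_def
proof (intro allI impI)
  fix \<beta> j assume zero: "\<forall>x\<in>{a..b}. (\<Sum>j<N. \<beta> j * v j x) = 0" and "j < N"
  have "hderiv {a..b} i (\<lambda>x. \<Sum>j<N. \<beta> j * v j x) c = hderiv {a..b} i (\<lambda>x. 0) c" for i
    using zero c by (intro hderiv_cong) auto
  then have "hderiv {a..b} i (\<lambda>x. \<Sum>j<N. \<beta> j * v j x) c = 0" for i
    using hderiv_const_zero[OF ab c] by simp
  then show "\<beta> j = 0"
    using lincomb_flat_coeffs_zero[OF c D ord inj order_refl] \<open>j < N\<close> ord_le by (simp add: le_imp_less_Suc)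
qed

lemma hderiv_lincomb_leading:
  fixes v :: "'i \<Rightarrow> real \<Rightarrow> 'a::real_normed_algebra"
  assumes c: "c \<in> {a..b}" and "finite A" "l \<in> A" and D: "\<And>j. j \<in> A \<Longrightarrow> v j \<in> Dm K a b"
    and low: "\<And>j i. j \<in> A \<Longrightarrow> i < K \<Longrightarrow> hderiv {a..b} i (v j) c = 0"
    and high: "\<And>j. j \<in> A - {l} \<Longrightarrow> hderiv {a..b} K (v j) c = 0"
  shows "i < K \<Longrightarrow> hderiv {a..b} i (\<lambda>x. \<Sum>j\<in>A. \<beta> j * v j x) c = 0"
    and "hderiv {a..b} K (\<lambda>x. \<Sum>j\<in>A. \<beta> j * v j x) c = \<beta> l * hderiv {a..b} K (v l) c"
proof -
  note lin = Dm_sum(2)[OF ab, where A=A and f=v and m=K and c=\<beta> and x=c, OF D _ c]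
  show "i < K \<Longrightarrow> hderiv {a..b} i (\<lambda>x. \<Sum>j\<in>A. \<beta> j * v j x) c = 0"
    using lin[of i] low by simp
  have "(\<Sum>j\<in>A. \<beta> j * hderiv {a..b} K (v j) c) = (\<Sum>j\<in>{l}. \<beta> j * hderiv {a..b} K (v j) c)"
    using assms(2,3) high by (intro sum.mono_neutral_right) auto
  then show "hderiv {a..b} K (\<lambda>x. \<Sum>j\<in>A. \<beta> j * v j x) c = \<beta> l * hderiv {a..b} K (v l) c"
    using lin[of K] by simp
qed

end

section \<open>Bernstein bases\<close>

lemma bernstein_basis_lin_indep:
  fixes p :: "nat \<Rightarrow> real \<Rightarrow> 'k::real_normed_field"
  assumes ab: "a < b" and p: "bernstein_basis V m a b p" and V: "V \<subseteq> Dm m a b"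
  shows "lin_indep_on {a..b} p (Suc m)"
proof (rule lin_indep_on_zero_orders[OF ab, where c=a and M=m and ord=id])
  show "p j \<in> Dm m a b" "zero_order a b (p j) a (id j)" if "j < Suc m" for j
    using p V that unfolding bernstein_basis_def by auto
qed (use ab in auto)

lemma bernstein_basis_spans:
  fixes p :: "nat \<Rightarrow> real \<Rightarrow> 'k::real_normed_field"
  assumes ab: "a < b" and p: "bernstein_basis U m a b p" and U: "U \<subseteq> Dm m a b"
    and dim: "has_dim a b U (Suc m)" and f: "f \<in> U"
  shows "in_span_on {a..b} p (Suc m) f"
proof -
  obtain e where e: "\<forall>g\<in>U. in_span_on {a..b} e (Suc m) g"
    using dim unfolding has_dim_iff by blast
  have "in_span_on {a..b} e (Suc m) (p i)" if "i < Suc m" for i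
    using e p that unfolding bernstein_basis_def by auto
  then show ?thesis
    using in_span_of_lin_indep bernstein_basis_lin_indep[OF ab p U] e f by blast
qed

lemma Dquot_subset_Dm:
  fixes f0 :: "real \<Rightarrow> 'k::real_normed_field"
  assumes ab: "a < b" and U: "U \<subseteq> Dm (Suc m) a b" and f0: "f0 \<in> Dm (Suc m) a b"
    and f0_nonzero: "\<And>x. x \<in> {a..b} \<Longrightarrow> f0 x \<noteq> 0"
  shows "Dquot a b f0 U \<subseteq> Dm m a b"
proof
  fix g assume "g \<in> Dquot a b f0 U"
  then obtain f where "f \<in> U" and g: "g = hderiv {a..b} 1 (\<lambda>x. f x / f0 x)"
    unfolding Dquot_def by blast
  then have "(\<lambda>x. f x / f0 x) \<in> Dm (Suc m) a b"
    using U Dm_divide[OF ab _ f0 f0_nonzero] by blast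
  then show "g \<in> Dm m a b"
    unfolding g Dm_Suc_iff by blast
qed

locale bernstein_pair =
  fixes a b :: real and n :: nat and U :: "(real \<Rightarrow> 'k::real_normed_field) set"
    and p q :: "nat \<Rightarrow> real \<Rightarrow> 'k" and f0 :: "real \<Rightarrow> 'k"
  assumes ab: "a < b" and U_Dm: "U \<subseteq> Dm n a b" and dim_U: "has_dim a b U (Suc n)"
    and p: "bernstein_basis U n a b p"
    and f0_U: "f0 \<in> U" and f0_nonzero: "\<And>x. x \<in> {a..b} \<Longrightarrow> f0 x \<noteq> 0"
    and q: "n \<ge> 1 \<Longrightarrow> bernstein_basis (Dquot a b f0 U) (n - 1) a b q"
begin

definition f0_coeff :: "nat \<Rightarrow> 'k" where
  "f0_coeff = (SOME \<alpha>. \<forall>x\<in>{a..b}. f0 x = (\<Sum>k<Suc n. \<alpha> k * p k x))"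

definition c_ratio :: "nat \<Rightarrow> 'k" where
  "c_ratio k = hderiv {a..b} k (p k) a / (f0 a * hderiv {a..b} (k - 1) (q (k - 1)) a)"

definition d_ratio :: "nat \<Rightarrow> 'k" where
  "d_ratio k = hderiv {a..b} (n - k) (p k) b / (f0 b * hderiv {a..b} (n - 1 - k) (q k) b)"

definition p_quot :: "nat \<Rightarrow> real \<Rightarrow> 'k" where
  "p_quot j x = p j x / f0 x"

definition Dp :: "nat \<Rightarrow> real \<Rightarrow> 'k" where
  "Dp j = hderiv {a..b} 1 (p_quot j)"

lemma a_in: "a \<in> {a..b}" and b_in: "b \<in> {a..b}"
  using ab by auto

lemma f0_Dm: "f0 \<in> Dm n a b"
  using U_Dm f0_U by blast

lemma p_props:
  assumes "j \<le> n"
  shows "p j \<in> Dm n a b" "zero_order a b (p j) a j" "zero_order a b (p j) b (n - j)"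
  using p U_Dm assms unfolding bernstein_basis_def by auto

lemma f0_expansion: "x \<in> {a..b} \<Longrightarrow> f0 x = (\<Sum>k<Suc n. f0_coeff k * p k x)"
proof -
  have "\<exists>\<alpha>. \<forall>x\<in>{a..b}. f0 x = (\<Sum>k<Suc n. \<alpha> k * p k x)"
    using bernstein_basis_spans[OF ab p U_Dm dim_U f0_U] unfolding in_span_on_def .
  then show "x \<in> {a..b} \<Longrightarrow> f0 x = (\<Sum>k<Suc n. f0_coeff k * p k x)"
    unfolding f0_coeff_def by (rule someI2_ex) blast
qed

lemma f0_coeff_0: "f0_coeff 0 = f0 a / p 0 a" and f0_coeff_0_nonzero: "f0_coeff 0 \<noteq> 0"
proof -
  have p0: "p 0 a \<noteq> 0"
    using p_props(2)[of 0] unfolding zero_order_def by simp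
  have "p (Suc i) a = 0" if "i < n" for i
    using p_props(2)[of "Suc i"] that unfolding zero_order_def by fastforce
  then have "f0 a = f0_coeff 0 * p 0 a"
    using f0_expansion[OF a_in] by (simp add: sum.lessThan_Suc_shift del: sum.lessThan_Suc)
  then show "f0_coeff 0 = f0 a / p 0 a" and "f0_coeff 0 \<noteq> 0"
    using p0 f0_nonzero[OF a_in] by (simp_all add: field_simps)
qed

lemma p_quot_Dm: "j \<le> n \<Longrightarrow> p_quot j \<in> Dm n a b"
  unfolding p_quot_def[abs_def] using Dm_divide[OF ab p_props(1) f0_Dm f0_nonzero] .

lemma Dp_Dm: "j \<le> n \<Longrightarrow> Dp j \<in> Dm (n - 1) a b"
  using p_quot_Dm Dm_Suc_iff[of "p_quot j" "n - 1"] unfolding Dp_def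
  by (cases n) auto

lemma hderiv_Dp: "hderiv {a..b} i (Dp j) = hderiv {a..b} (Suc i) (p_quot j)"
  unfolding Dp_def hderiv_hderiv_one ..

lemma p_quot_at_a:
  assumes "j \<le> n"
  shows "i < j \<Longrightarrow> hderiv {a..b} i (p_quot j) a = 0"
    and "hderiv {a..b} j (p_quot j) a = hderiv {a..b} j (p j) a / f0 a"
  using hderiv_divide_flat[OF ab a_in Dm_mono[OF p_props(1)] Dm_mono[OF f0_Dm] f0_nonzero]
    p_props(2)[OF assms] assms unfolding p_quot_def[abs_def] zero_order_def by auto

lemma p_quot_at_b:
  assumes "j \<le> n"
  shows "i < n - j \<Longrightarrow> hderiv {a..b} i (p_quot j) b = 0"
    and "hderiv {a..b} (n - j) (p_quot j) b = hderiv {a..b} (n - j) (p j) b / f0 b"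
  using hderiv_divide_flat[OF ab b_in Dm_mono[OF p_props(1)] Dm_mono[OF f0_Dm] f0_nonzero]
    p_props(3)[OF assms] assms unfolding p_quot_def[abs_def] zero_order_def by auto

lemma hderiv_one_quot_lincomb:
  assumes "0 < n" "x \<in> {a..b}" "\<And>y. y \<in> {a..b} \<Longrightarrow> f y = (\<Sum>j<Suc n. \<beta> j * p j y)"
  shows "hderiv {a..b} 1 (\<lambda>y. f y / f0 y) x = (\<Sum>j<Suc n. \<beta> j * Dp j x)"
proof -
  have "hderiv {a..b} 1 (\<lambda>y. f y / f0 y) x = hderiv {a..b} 1 (\<lambda>y. \<Sum>j<Suc n. \<beta> j * p_quot j y) x"
    using assms(2,3) by (intro hderiv_cong) (simp_all add: p_quot_def sum_divide_distrib del: sum.lessThan_Suc)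
  also have "\<dots> = (\<Sum>j<Suc n. \<beta> j * hderiv {a..b} 1 (p_quot j) x)"
    using p_quot_Dm assms(1,2) by (intro Dm_sum(2)[OF ab, where m=n]) auto
  finally show ?thesis
    unfolding Dp_def .
qed

lemma sum_f0_coeff_Dp:
  assumes "0 < n" "x \<in> {a..b}"
  shows "(\<Sum>j<Suc n. f0_coeff j * Dp j x) = 0"
proof -
  have "(\<Sum>j<Suc n. f0_coeff j * Dp j x) = hderiv {a..b} 1 (\<lambda>y. f0 y / f0 y) x"
    using hderiv_one_quot_lincomb[OF assms f0_expansion] by simp
  also have "\<dots> = hderiv {a..b} 1 (\<lambda>y. 1) x"
    using assms(2) f0_nonzero by (intro hderiv_cong) auto
  also have "\<dots> = 0"
    using assms(2) by (intro hderiv_one_eqI[OF ab]) auto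
  finally show ?thesis .
qed

lemma Dquot_in_span_Dp:
  assumes "0 < n" and g: "g \<in> Dquot a b f0 U"
  shows "in_span_on {a..b} (\<lambda>i. Dp (Suc i)) n g"
proof -
  obtain f where "f \<in> U" and g_eq: "g = hderiv {a..b} 1 (\<lambda>x. f x / f0 x)"
    using g unfolding Dquot_def by blast
  then obtain \<beta> where \<beta>: "\<And>y. y \<in> {a..b} \<Longrightarrow> f y = (\<Sum>j<Suc n. \<beta> j * p j y)"
    using bernstein_basis_spans[OF ab p U_Dm dim_U] unfolding in_span_on_def by metis
  define \<gamma> where "\<gamma> i = \<beta> (Suc i) - \<beta> 0 * f0_coeff (Suc i) / f0_coeff 0" for i
  have "g x = (\<Sum>i<n. \<gamma> i * Dp (Suc i) x)" if x: "x \<in> {a..b}" for x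
  proof -
    have "f0_coeff 0 * Dp 0 x = - (\<Sum>i<n. f0_coeff (Suc i) * Dp (Suc i) x)"
      using sum_f0_coeff_Dp[OF assms(1) x]
      by (simp add: sum.lessThan_Suc_shift eq_neg_iff_add_eq_0 del: sum.lessThan_Suc)
    then have Dp0: "Dp 0 x = - (\<Sum>i<n. f0_coeff (Suc i) * Dp (Suc i) x) / f0_coeff 0"
      using f0_coeff_0_nonzero by (simp add: field_simps)
    have "g x = \<beta> 0 * Dp 0 x + (\<Sum>i<n. \<beta> (Suc i) * Dp (Suc i) x)"
      using hderiv_one_quot_lincomb[OF assms(1) x \<beta>] unfolding g_eq
      by (simp add: sum.lessThan_Suc_shift del: sum.lessThan_Suc)
    also have "\<dots> = (\<Sum>i<n. \<gamma> i * Dp (Suc i) x)"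
      unfolding Dp0 \<gamma>_def
      by (simp add: algebra_simps sum_subtractf sum_distrib_left sum_divide_distrib)
    finally show ?thesis .
  qed
  then show ?thesis
    unfolding in_span_on_def by blast
qed

lemma Dquot_Dm: "0 < n \<Longrightarrow> Dquot a b f0 U \<subseteq> Dm (n - 1) a b"
  using Dquot_subset_Dm[OF ab _ _ f0_nonzero, of U "n - 1"] U_Dm f0_Dm by simp

lemma q_props:
  assumes "j < n"
  shows "q j \<in> Dquot a b f0 U" "q j \<in> Dm (n - 1) a b"
    and "zero_order a b (q j) a j" "zero_order a b (q j) b (n - 1 - j)"
  using q Dquot_Dm assms unfolding bernstein_basis_def by auto

lemma in_span_Dp_imp_in_span_q:
  assumes "0 < n" "in_span_on {a..b} (\<lambda>i. Dp (Suc i)) n g"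
  shows "in_span_on {a..b} q n g"
proof (rule in_span_of_lin_indep)
  show "lin_indep_on {a..b} q n"
    using bernstein_basis_lin_indep[OF ab q Dquot_Dm] assms(1) by simp
qed (use assms q_props(1) Dquot_in_span_Dp in auto)

definition Dp_tail :: "nat \<Rightarrow> real \<Rightarrow> 'k" where
  "Dp_tail k = (\<lambda>x. \<Sum>i\<in>{k..<n}. f0_coeff (Suc i) * Dp (Suc i) x)"

definition Dp_head :: "nat \<Rightarrow> real \<Rightarrow> 'k" where
  "Dp_head k = (\<lambda>x. \<Sum>i\<in>{..k}. f0_coeff i * Dp i x)"

lemma Dp_head_eq_neg_tail:
  assumes "k < n" "x \<in> {a..b}"
  shows "Dp_head k x = - Dp_tail k x"
proof -
  have "(\<Sum>j\<in>{0..<Suc n}. f0_coeff j * Dp j x)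
      = (\<Sum>j\<in>{0..<Suc k}. f0_coeff j * Dp j x) + (\<Sum>j\<in>{Suc k..<Suc n}. f0_coeff j * Dp j x)"
    using assms(1) by (intro sum.atLeastLessThan_concat[symmetric]) auto
  also have "\<dots> = Dp_head k x + Dp_tail k x"
    unfolding Dp_head_def Dp_tail_def sum.shift_bounds_Suc_ivl atLeast0LessThan lessThan_Suc_atMost ..
  finally show ?thesis
    using sum_f0_coeff_Dp assms by (simp add: atLeast0LessThan eq_neg_iff_add_eq_0)
qed

lemma Dp_tail_at_a:
  assumes "k < n"
  shows "i < k \<Longrightarrow> hderiv {a..b} i (Dp_tail k) a = 0"
    and "hderiv {a..b} k (Dp_tail k) a = f0_coeff (Suc k) * (hderiv {a..b} (Suc k) (p (Suc k)) a / f0 a)"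
proof -
  note leading = hderiv_lincomb_leading[OF ab a_in, where A="{k..<n}" and l=k and K=k
      and v="\<lambda>i. Dp (Suc i)" and \<beta>="\<lambda>i. f0_coeff (Suc i)"]
  have "Dp (Suc j) \<in> Dm k a b" if "j \<in> {k..<n}" for j
    using Dm_mono[OF Dp_Dm[of "Suc j"], of k] that by auto
  moreover have "hderiv {a..b} i (Dp (Suc j)) a = 0" if "j \<in> {k..<n}" "i < k" for i j
    using p_quot_at_a(1)[of "Suc j" "Suc i"] that unfolding hderiv_Dp by simp
  moreover have "hderiv {a..b} k (Dp (Suc j)) a = 0" if "j \<in> {k..<n} - {k}" for j
    using p_quot_at_a(1)[of "Suc j" "Suc k"] that unfolding hderiv_Dp by simp
  ultimately show "i < k \<Longrightarrow> hderiv {a..b} i (Dp_tail k) a = 0"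
    and "hderiv {a..b} k (Dp_tail k) a = f0_coeff (Suc k) * (hderiv {a..b} (Suc k) (p (Suc k)) a / f0 a)"
    using leading assms p_quot_at_a(2)[of "Suc k"] unfolding Dp_tail_def hderiv_Dp by simp_all
qed

lemma Dp_head_at_b:
  assumes "k < n"
  shows "i < n - 1 - k \<Longrightarrow> hderiv {a..b} i (Dp_head k) b = 0"
    and "hderiv {a..b} (n - 1 - k) (Dp_head k) b = f0_coeff k * (hderiv {a..b} (n - k) (p k) b / f0 b)"
proof -
  note leading = hderiv_lincomb_leading[OF ab b_in, where A="{..k}" and l=k and K="n - 1 - k"
      and v=Dp and \<beta>=f0_coeff]
  have "Dp j \<in> Dm (n - 1 - k) a b" if "j \<in> {..k}" for j
    using Dm_mono[OF Dp_Dm[of j], of "n - 1 - k"] that assms by simp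
  moreover have "hderiv {a..b} i (Dp j) b = 0" if "j \<in> {..k}" "i < n - 1 - k" for i j
    using p_quot_at_b(1)[of j "Suc i"] that assms unfolding hderiv_Dp by simp
  moreover have "hderiv {a..b} (n - 1 - k) (Dp j) b = 0" if "j \<in> {..k} - {k}" for j
  proof -
    have "n - k < n - j"
      using that assms by auto
    then show ?thesis
      using p_quot_at_b(1)[of j "n - k"] that assms unfolding hderiv_Dp by (simp add: Suc_diff_Suc)
  qed
  moreover have "Suc (n - 1 - k) = n - k"
    using assms by simp
  ultimately show "i < n - 1 - k \<Longrightarrow> hderiv {a..b} i (Dp_head k) b = 0"
    and "hderiv {a..b} (n - 1 - k) (Dp_head k) b = f0_coeff k * (hderiv {a..b} (n - k) (p k) b / f0 b)"
    using leading assms p_quot_at_b(2)[of k] unfolding Dp_head_def hderiv_Dp by simp_all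
qed

lemma Dp_tail_multiple_of_q:
  assumes k: "k < n"
  shows "\<exists>\<beta>. \<forall>x\<in>{a..b}. Dp_tail k x = \<beta> * q k x"
proof -
  have "in_span_on {a..b} (\<lambda>i. Dp (Suc i)) n (Dp_tail k)"
    unfolding Dp_tail_def by (rule in_span_on_subset_sum) auto
  then have "in_span_on {a..b} q n (Dp_tail k)"
    using k by (intro in_span_Dp_imp_in_span_q) auto
  then obtain \<beta> where \<beta>: "\<And>x. x \<in> {a..b} \<Longrightarrow> Dp_tail k x = (\<Sum>i<n. \<beta> i * q i x)"
    unfolding in_span_on_def by blast
  have "hderiv {a..b} i (\<lambda>x. \<Sum>j<n. \<beta> j * q j x) a = 0" if "i < k" for i
    using hderiv_cong[OF \<beta> a_in, symmetric] Dp_tail_at_a(1)[OF k that] by simp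
  then have below: "\<beta> j = 0" if "j < n" "j < k" for j
    using lincomb_flat_coeffs_zero[OF ab a_in q_props(2) q_props(3) inj_on_id, of n k] that k by simp
  have "hderiv {a..b} i (\<lambda>x. \<Sum>j<n. - \<beta> j * q j x) b = 0" if "i < n - 1 - k" for i
  proof -
    have "\<And>x. x \<in> {a..b} \<Longrightarrow> (\<Sum>j<n. - \<beta> j * q j x) = Dp_head k x"
      using \<beta> Dp_head_eq_neg_tail[OF k] by (simp add: sum_negf)
    from hderiv_cong[OF this b_in] show ?thesis
      using Dp_head_at_b(1)[OF k that] by simp
  qed
  moreover have "inj_on (\<lambda>j. n - 1 - j) {..<n}"
    by (auto simp: inj_on_def)
  ultimately have above: "\<beta> j = 0" if "j < n" "k < j" for j
    using lincomb_flat_coeffs_zero[OF ab b_in, where v=q and ord="\<lambda>j. n - 1 - j" and K="n - 1 - k"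
        and \<beta>="\<lambda>j. - \<beta> j", OF q_props(2) q_props(4)] that
    by simp
  have "(\<Sum>j<n. \<beta> j * q j x) = \<beta> k * q k x" for x
  proof -
    have "(\<Sum>j<n. \<beta> j * q j x) = (\<Sum>j<n. if j = k then \<beta> k * q k x else 0)"
      using below above by (intro sum.cong) (auto simp: nat_neq_iff)
    then show ?thesis
      using k by simp
  qed
  then show ?thesis
    using \<beta> by auto
qed

lemma f0_coeff_Suc:
  assumes k: "k < n"
  shows "f0_coeff (Suc k) = - f0_coeff k * d_ratio k / c_ratio (Suc k)"
proof -
  obtain \<beta> where \<beta>: "\<And>x. x \<in> {a..b} \<Longrightarrow> Dp_tail k x = \<beta> * q k x"
    using Dp_tail_multiple_of_q[OF k] by blast
  have qD: "q k \<in> Dm (n - 1) a b" and "k \<le> n - 1" "n - 1 - k \<le> n - 1"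
    using q_props(2) k by auto
  have head: "\<And>x. x \<in> {a..b} \<Longrightarrow> Dp_head k x = - \<beta> * q k x"
    using \<beta> Dp_head_eq_neg_tail[OF k] by simp
  have "hderiv {a..b} k (Dp_tail k) a = \<beta> * hderiv {a..b} k (q k) a"
    using hderiv_cong[OF \<beta> a_in] Dm_scale(2)[OF ab qD \<open>k \<le> n - 1\<close> a_in] by simp
  then have c: "f0_coeff (Suc k) * c_ratio (Suc k) = \<beta>"
    using Dp_tail_at_a(2)[OF k] q_props(3)[OF k] f0_nonzero[OF a_in]
    unfolding c_ratio_def zero_order_def by (simp add: field_simps)
  have "hderiv {a..b} (n - 1 - k) (Dp_head k) b = - \<beta> * hderiv {a..b} (n - 1 - k) (q k) b"
    using hderiv_cong[where g="\<lambda>x. - \<beta> * q k x", OF head b_in]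
      Dm_scale(2)[OF ab qD \<open>n - 1 - k \<le> n - 1\<close> b_in, of "- \<beta>"] by (rule trans)
  then have d: "f0_coeff k * d_ratio k = - \<beta>"
    using Dp_head_at_b(2)[OF k] q_props(4)[OF k] f0_nonzero[OF b_in]
    unfolding d_ratio_def zero_order_def by (simp add: field_simps)
  have "c_ratio (Suc k) \<noteq> 0"
    using p_props(2)[of "Suc k"] q_props(3)[OF k] f0_nonzero[OF a_in] k
    unfolding c_ratio_def zero_order_def by simp
  with c d show ?thesis
    by (simp add: field_simps)
qed

lemma f0_coeff_closed_form:
  "k \<le> n \<Longrightarrow> f0_coeff k = (-1) ^ k * ((\<Prod>i<k. d_ratio i) / (\<Prod>i=1..k. c_ratio i)) * (f0 a / p 0 a)"
proof (induction k)
  case 0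
  then show ?case by (simp add: f0_coeff_0)
next
  case (Suc k)
  then show ?case
    unfolding f0_coeff_Suc[OF Suc_le_lessD[OF Suc.prems]] prod.lessThan_Suc prod.nat_ivl_Suc'[of 1 k]
    by (simp add: ac_simps)
qed

end

theorem theorem4:
  fixes U :: "(real \<Rightarrow> 'k::real_normed_field) set"
    and p q :: "nat \<Rightarrow> real \<Rightarrow> 'k" and f0 :: "real \<Rightarrow> 'k"
    and a b :: real and n :: nat
  assumes ab: "a < b"
    and U: "fun_subspace n a b U" and dimU: "has_dim a b U (n + 1)"
    and p: "bernstein_basis U n a b p"
    and f0U: "f0 \<in> U" and f0pos: "\<forall>x\<in>{a..b}. \<exists>r>0. f0 x = of_real r"
    and q: "n \<ge> 1 \<Longrightarrow> bernstein_basis (Dquot a b f0 U) (n - 1) a b q"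
  shows "\<forall>x\<in>{a..b}.
    (let c = (\<lambda>k. hderiv {a..b} k (p k) a / (f0 a * hderiv {a..b} (k - 1) (q (k - 1)) a));
         d = (\<lambda>k. hderiv {a..b} (n - k) (p k) b / (f0 b * hderiv {a..b} (n - 1 - k) (q k) b))
     in f0 x = f0 a / p 0 a * p 0 x
        + (\<Sum>k=1..n. (-1) ^ k * ((\<Prod>i<k. d i) / (\<Prod>i=1..k. c i)) * (f0 a / p 0 a) * p k x))"
proof -
  have "U \<subseteq> Dm n a b"
    using U Cm_subset_Dm unfolding fun_subspace_def by blast
  moreover have "\<And>x. x \<in> {a..b} \<Longrightarrow> f0 x \<noteq> 0"
    using f0pos by fastforce
  ultimately interpret bernstein_pair a b n U p q f0
    using ab dimU p f0U q by unfold_locales simp_all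
  show ?thesis
    unfolding Let_def c_ratio_def[symmetric] d_ratio_def[symmetric]
  proof
    fix x assume x: "x \<in> {a..b}"
    have "f0 x = f0_coeff 0 * p 0 x + (\<Sum>k=1..n. f0_coeff k * p k x)"
      using f0_expansion[OF x] by (simp add: sum.lessThan_Suc_shift sum.atLeast1_atMost_eq del: sum.lessThan_Suc)
    also have "\<dots> = f0 a / p 0 a * p 0 x + (\<Sum>k=1..n.
        (-1) ^ k * ((\<Prod>i<k. d_ratio i) / (\<Prod>i=1..k. c_ratio i)) * (f0 a / p 0 a) * p k x)"
      unfolding f0_coeff_0 by (intro arg_cong2[where f="(+)"] sum.cong refl) (simp add: f0_coeff_closed_form)
    finally show "f0 x = f0 a / p 0 a * p 0 x + (\<Sum>k=1..n.
        (-1) ^ k * ((\<Prod>i<k. d_ratio i) / (\<Prod>i=1..k. c_ratio i)) * (f0 a / p 0 a) * p k x)" .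
  qed
qed

end
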